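(* Let $X$ be a proper geodesic $\mathrm{CAT}(-1)$ metric space and $\epsilon>0$, and let $$c_0(\epsilon)=2\log\left(\frac{2(1+e^{\epsilon/2})\sinh\epsilon}{\epsilon}\right).$$ For all points $a,b,a',b'\in X$ such that $d(a,a')\le\epsilon$, $d(b,b')\le\epsilon$ and $d(a,b)\ge c_0(\epsilon)$, if $m$ is the midpoint of the geodesic segment $[a,b]$, then $d(m,[a',b'])\le\epsilon/2$. *)

theory Defs
  imports "HOL-Analysis.Analysis"
begin

text \<open>A metric space is modelled as a subset X of a metric_space type with the induced metric.\<close>

definition proper_space :: "'a::metric_space set \<Rightarrow> bool" where
  "proper_space X \<longleftrightarrow> (\<forall>x\<in>X. \<forall>r. compact (cball x r \<inter> X))"

definition geodesic_segment_between :: "'a::metric_space set \<Rightarrow> 'a set \<Rightarrow> 'a \<Rightarrow> 'a \<Rightarrow> bool" where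
  "geodesic_segment_between X S a b \<longleftrightarrow>
     (\<exists>\<gamma>::real \<Rightarrow> 'a. \<gamma> ` {0..dist a b} = S \<and> S \<subseteq> X \<and> \<gamma> 0 = a \<and> \<gamma> (dist a b) = b \<and>
        (\<forall>s\<in>{0..dist a b}. \<forall>t\<in>{0..dist a b}. dist (\<gamma> s) (\<gamma> t) = \<bar>s - t\<bar>))"

definition geodesic_space :: "'a::metric_space set \<Rightarrow> bool" where
  "geodesic_space X \<longleftrightarrow> (\<forall>a\<in>X. \<forall>b\<in>X. \<exists>S. geodesic_segment_between X S a b)"

text \<open>The real hyperbolic plane (curvature -1), upper half-plane model.\<close>
definition hyp_plane :: "complex set" where
  "hyp_plane = {z. Im z > 0}"

definition hdist :: "complex \<Rightarrow> complex \<Rightarrow> real" where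
  "hdist z w = arcosh (1 + (cmod (z - w))\<^sup>2 / (2 * Im z * Im w))"

text \<open>Given a geodesic triangle with vertices x y z and sides Sxy Syz Sxz, and a
  comparison triangle x' y' z' in the hyperbolic plane, p' is a comparison point for p
  if p lies on a side and p' lies on the corresponding side of the comparison triangle
  at the same distances from its endpoints (in the uniquely geodesic hyperbolic plane
  this determines the point on the comparison side).\<close>
definition comparison_point ::
  "'a::metric_space \<Rightarrow> 'a \<Rightarrow> 'a \<Rightarrow> 'a set \<Rightarrow> 'a set \<Rightarrow> 'a set \<Rightarrow>
   complex \<Rightarrow> complex \<Rightarrow> complex \<Rightarrow> 'a \<Rightarrow> complex \<Rightarrow> bool" where
  "comparison_point x y z Sxy Syz Sxz x' y' z' p p' \<longleftrightarrow> p' \<in> hyp_plane \<and>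
     ((p \<in> Sxy \<and> hdist x' p' = dist x p \<and> hdist p' y' = dist p y) \<or>
      (p \<in> Syz \<and> hdist y' p' = dist y p \<and> hdist p' z' = dist p z) \<or>
      (p \<in> Sxz \<and> hdist x' p' = dist x p \<and> hdist p' z' = dist p z))"

definition CAT_minus1 :: "'a::metric_space set \<Rightarrow> bool" where
  "CAT_minus1 X \<longleftrightarrow>
    (\<forall>x\<in>X. \<forall>y\<in>X. \<forall>z\<in>X. \<forall>Sxy Syz Sxz.
      geodesic_segment_between X Sxy x y \<and> geodesic_segment_between X Syz y z \<and>
      geodesic_segment_between X Sxz x z \<longrightarrow>
      (\<forall>x' y' z'. x' \<in> hyp_plane \<and> y' \<in> hyp_plane \<and> z' \<in> hyp_plane \<and>
         hdist x' y' = dist x y \<and> hdist y' z' = dist y z \<and> hdist x' z' = dist x z \<longrightarrow>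
         (\<forall>p q p' q'. comparison_point x y z Sxy Syz Sxz x' y' z' p p' \<and>
                      comparison_point x y z Sxy Syz Sxz x' y' z' q q' \<longrightarrow>
                      dist p q \<le> hdist p' q')))"

definition c0 :: "real \<Rightarrow> real" where
  "c0 \<epsilon> = 2 * ln (2 * (1 + exp (\<epsilon> / 2)) * sinh \<epsilon> / \<epsilon>)"

end

theory Submission
  imports Defs
begin

text \<open>Let n be the point of a geodesic [a, b'] at distance d(a, b)/2 from a, and k the point of
  [a', b'] at distance d(b', n) from b'. Each of the pairs (m, n) and (n, k) consists of two points
  at the same distance s from a vertex z of a geodesic triangle z x y with d(x, y) \<le> \<epsilon>, and
  d(z, x) - s = d(a, b)/2 in both cases. Comparing with the hyperbolic triangle of the same side
  lengths, cosh of their distance is at most 1 + exp(-d(a, b)) (sinh \<epsilon>)^2 / 2, and the hypothesis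
  d(a, b) \<ge> c0(\<epsilon>) makes this at most cosh(\<epsilon>/4).\<close>

text \<open>The point at hyperbolic distance r from \<open>\<i>\<close> along the geodesic leaving \<open>\<i>\<close> at the
  angle whose cosine is g and sine is t, measured from the upward vertical.\<close>
definition hyp_polar :: "real \<Rightarrow> real \<Rightarrow> real \<Rightarrow> complex" where
  "hyp_polar r g t = Complex (sinh r * t / (cosh r - sinh r * g)) (1 / (cosh r - sinh r * g))"

text \<open>With c, h standing for cosh r, sinh r, the left-hand side is the argument of arcosh in
  the hyperbolic distance of two points given in polar form by \<open>hyp_polar\<close>.\<close>
lemma half_plane_polar_identity:
  fixes c1 h1 g1 t1 c2 h2 g2 t2 k1 k2 :: real
  assumes "c1\<^sup>2 = h1\<^sup>2 + 1" "c2\<^sup>2 = h2\<^sup>2 + 1" "g1\<^sup>2 + t1\<^sup>2 = 1" "g2\<^sup>2 + t2\<^sup>2 = 1"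
    and "k1 = c1 - h1 * g1" "k2 = c2 - h2 * g2" "k1 \<noteq> 0" "k2 \<noteq> 0"
  shows "1 + ((h1 * t1 / k1 - h2 * t2 / k2)\<^sup>2 + (1 / k1 - 1 / k2)\<^sup>2) / (2 * (1 / k1) * (1 / k2))
     = c1 * c2 - h1 * h2 * (g1 * g2 + t1 * t2)"
proof -
  have "1 + ((h1 * t1 / k1 - h2 * t2 / k2)\<^sup>2 + (1 / k1 - 1 / k2)\<^sup>2) / (2 * (1 / k1) * (1 / k2))
     = 1 + ((h1 * t1 * k2 - h2 * t2 * k1)\<^sup>2 + (k2 - k1)\<^sup>2) / (2 * k1 * k2)"
    using \<open>k1 \<noteq> 0\<close> \<open>k2 \<noteq> 0\<close> by (simp add: field_simps power2_eq_square)
  also have "(h1 * t1 * k2 - h2 * t2 * k1)\<^sup>2 + (k2 - k1)\<^sup>2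
      = 2 * k1 * k2 * (c1 * c2 - h1 * h2 * (g1 * g2 + t1 * t2) - 1)"
    using assms(1-6) by algebra
  finally show ?thesis using \<open>k1 \<noteq> 0\<close> \<open>k2 \<noteq> 0\<close> by simp
qed

lemma cosh_sub_sinh_mult_pos:
  fixes r g :: real
  assumes "0 \<le> r" "g \<le> 1"
  shows "0 < cosh r - sinh r * g"
proof -
  have "sinh r * g \<le> sinh r" using assms mult_left_le[of g "sinh r"] by simp
  moreover have "0 < cosh r - sinh r" by (simp add: cosh_minus_sinh)
  ultimately show ?thesis by linarith
qed

lemma hyp_polar_in_hyp_plane: "0 \<le> r \<Longrightarrow> g \<le> 1 \<Longrightarrow> hyp_polar r g t \<in> hyp_plane"
  using cosh_sub_sinh_mult_pos by (simp add: hyp_polar_def hyp_plane_def)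

lemma hyp_polar_zero [simp]: "hyp_polar 0 g t = \<i>"
  by (simp add: hyp_polar_def complex_eq_iff)

lemma hdist_hyp_polar:
  assumes "0 \<le> r1" "g1 \<le> 1" "g1\<^sup>2 + t1\<^sup>2 = 1" "0 \<le> r2" "g2 \<le> 1" "g2\<^sup>2 + t2\<^sup>2 = 1"
  shows "hdist (hyp_polar r1 g1 t1) (hyp_polar r2 g2 t2)
    = arcosh (cosh r1 * cosh r2 - sinh r1 * sinh r2 * (g1 * g2 + t1 * t2))"
proof -
  have "cosh r1 - sinh r1 * g1 \<noteq> 0" "cosh r2 - sinh r2 * g2 \<noteq> 0"
    using cosh_sub_sinh_mult_pos assms by (metis less_irrefl)+
  from half_plane_polar_identity[OF cosh_square_eq cosh_square_eq assms(3,6) refl refl this]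
  show ?thesis by (simp add: hdist_def hyp_polar_def cmod_power2)
qed

lemma hdist_hyp_polar_same_direction:
  assumes "g \<le> 1" "g\<^sup>2 + t\<^sup>2 = 1" "0 \<le> r1" "0 \<le> r2"
  shows "hdist (hyp_polar r1 g t) (hyp_polar r2 g t) = \<bar>r1 - r2\<bar>"
proof -
  have "g * g + t * t = 1" using assms(2) by (simp add: power2_eq_square)
  then have "hdist (hyp_polar r1 g t) (hyp_polar r2 g t) = arcosh (cosh \<bar>r1 - r2\<bar>)"
    using hdist_hyp_polar[OF assms(3,1,2) assms(4,1,2)] by (simp add: cosh_diff)
  then show ?thesis by (simp add: arcosh_cosh_real del: cosh_real_abs)
qed

lemma hdist_hyp_polar_angle:
  assumes "g \<le> 1" "g\<^sup>2 + t\<^sup>2 = 1" "0 \<le> r1" "0 \<le> r2"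
  shows "hdist (hyp_polar r1 1 0) (hyp_polar r2 g t) = arcosh (cosh r1 * cosh r2 - sinh r1 * sinh r2 * g)"
  using hdist_hyp_polar[of r1 1 0 r2 g t] assms by simp

text \<open>By the hyperbolic law of cosines, g is the cosine of the angle between the sides of
  lengths a and b of a hyperbolic triangle with third side c.\<close>
lemma hyperbolic_triangle_angle_exists:
  fixes a b c :: real
  assumes "0 < a" "0 < b" "\<bar>a - b\<bar> \<le> c" "c \<le> a + b"
  obtains g where "-1 \<le> g" "g \<le> 1" "cosh c = cosh a * cosh b - sinh a * sinh b * g"
proof
  define g where "g = (cosh a * cosh b - cosh c) / (sinh a * sinh b)"
  have sab: "0 < sinh a * sinh b" using assms by simp
  have "cosh c \<le> cosh (a + b)" using assms by (subst cosh_real_nonneg_le_iff) auto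
  then show "-1 \<le> g" using sab unfolding g_def cosh_add by (simp add: field_simps)
  have "cosh (a - b) \<le> cosh c"
    using assms cosh_real_nonneg_le_iff[of "\<bar>a - b\<bar>" c] by simp
  then show "g \<le> 1" using sab unfolding g_def cosh_diff by (simp add: field_simps)
  have "sinh a \<noteq> 0" "sinh b \<noteq> 0" using assms by auto
  then show "cosh c = cosh a * cosh b - sinh a * sinh b * g" unfolding g_def by (simp add: field_simps)
qed

lemma geodesic_segment_betweenE:
  assumes "geodesic_segment_between X S a b"
  obtains \<gamma> where "\<gamma> ` {0..dist a b} = S" "S \<subseteq> X" "\<gamma> 0 = a" "\<gamma> (dist a b) = b"
    "\<And>s t. s \<in> {0..dist a b} \<Longrightarrow> t \<in> {0..dist a b} \<Longrightarrow> dist (\<gamma> s) (\<gamma> t) = \<bar>s - t\<bar>"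
  using assms unfolding geodesic_segment_between_def by blast

lemma geodesic_segment_endpoints_in:
  assumes "geodesic_segment_between X S a b"
  shows "a \<in> X" "b \<in> X"
proof -
  obtain \<gamma> where "\<gamma> ` {0..dist a b} = S" "S \<subseteq> X" "\<gamma> 0 = a" "\<gamma> (dist a b) = b"
    using geodesic_segment_betweenE[OF assms] by metis
  moreover have "0 \<in> {0..dist a b}" "dist a b \<in> {0..dist a b}" by auto
  ultimately show "a \<in> X" "b \<in> X" by (metis imageI subsetD)+
qed

lemma geodesic_segment_dist_add:
  assumes "geodesic_segment_between X S a b" "p \<in> S"
  shows "dist a p + dist p b = dist a b"
proof -
  obtain \<gamma> where \<gamma>: "\<gamma> ` {0..dist a b} = S" "\<gamma> 0 = a" "\<gamma> (dist a b) = b"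
    "\<And>s t. s \<in> {0..dist a b} \<Longrightarrow> t \<in> {0..dist a b} \<Longrightarrow> dist (\<gamma> s) (\<gamma> t) = \<bar>s - t\<bar>"
    using geodesic_segment_betweenE[OF assms(1)] by metis
  obtain t where t: "t \<in> {0..dist a b}" "p = \<gamma> t" using \<gamma>(1) assms(2) by blast
  have "dist a p = t" using \<gamma>(4)[of 0 t] \<gamma>(2) t by auto
  moreover have "dist p b = dist a b - t" using \<gamma>(4)[of t "dist a b"] \<gamma>(3) t by auto
  ultimately show ?thesis by simp
qed

lemma geodesic_segment_point_at_dist:
  assumes "geodesic_segment_between X S a b" "0 \<le> s" "s \<le> dist a b"
  obtains p where "p \<in> S" "dist a p = s"
proof -
  obtain \<gamma> where \<gamma>: "\<gamma> ` {0..dist a b} = S" "\<gamma> 0 = a"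
    "\<And>s t. s \<in> {0..dist a b} \<Longrightarrow> t \<in> {0..dist a b} \<Longrightarrow> dist (\<gamma> s) (\<gamma> t) = \<bar>s - t\<bar>"
    using geodesic_segment_betweenE[OF assms(1)] by metis
  have "\<gamma> s \<in> S" using \<gamma>(1) assms(2,3) by auto
  moreover have "dist a (\<gamma> s) = s" using \<gamma>(3)[of 0 s] \<gamma>(2) assms(2,3) by auto
  ultimately show thesis by (rule that)
qed

lemma geodesic_segment_between_commute:
  assumes "geodesic_segment_between X S a b"
  shows "geodesic_segment_between X S b a"
proof -
  obtain \<gamma> where \<gamma>: "\<gamma> ` {0..dist a b} = S" "S \<subseteq> X" "\<gamma> 0 = a" "\<gamma> (dist a b) = b"
    "\<And>s t. s \<in> {0..dist a b} \<Longrightarrow> t \<in> {0..dist a b} \<Longrightarrow> dist (\<gamma> s) (\<gamma> t) = \<bar>s - t\<bar>"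
    using geodesic_segment_betweenE[OF assms] by metis
  define \<delta> where "\<delta> t = \<gamma> (dist a b - t)" for t
  have "\<delta> ` {0..dist a b} = \<gamma> ` ((-) (dist a b) ` {0..dist a b})"
    unfolding \<delta>_def image_image ..
  then have "\<delta> ` {0..dist b a} = S" using \<gamma>(1) by (simp add: dist_commute)
  moreover have "\<forall>s\<in>{0..dist b a}. \<forall>t\<in>{0..dist b a}. dist (\<delta> s) (\<delta> t) = \<bar>s - t\<bar>"
    using \<gamma>(5) by (simp add: \<delta>_def dist_commute abs_minus_commute)
  ultimately show ?thesis
    unfolding geodesic_segment_between_def using \<gamma>(2-4) by (auto simp: \<delta>_def dist_commute)
qed

lemma hyperbolic_triangle_equidistant_points:
  fixes a b c s :: real
  assumes "0 < a" "0 < b" "\<bar>a - b\<bar> \<le> c" "c \<le> a + b" "0 \<le> s" "s \<le> a" "s \<le> b"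
  obtains X' Y' P' Q' where "X' \<in> hyp_plane" "Y' \<in> hyp_plane" "P' \<in> hyp_plane" "Q' \<in> hyp_plane"
    "hdist \<i> X' = a" "hdist X' Y' = c" "hdist \<i> Y' = b"
    "hdist \<i> P' = s" "hdist P' X' = a - s" "hdist \<i> Q' = s" "hdist Q' Y' = b - s"
    "cosh (hdist P' Q') = 1 + (sinh s)\<^sup>2 * (cosh c - cosh (a - b)) / (sinh a * sinh b)"
proof -
  obtain g where g: "-1 \<le> g" "g \<le> 1" "cosh c = cosh a * cosh b - sinh a * sinh b * g"
    using hyperbolic_triangle_angle_exists assms(1-4) by metis
  define t where "t = sqrt (1 - g\<^sup>2)"
  have gt: "g\<^sup>2 + t\<^sup>2 = 1" using g(1,2) unfolding t_def by (simp add: abs_square_le_1)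
  have same_dir: "hdist (hyp_polar r1 1 0) (hyp_polar r2 1 0) = \<bar>r1 - r2\<bar>"
    "hdist (hyp_polar r1 g t) (hyp_polar r2 g t) = \<bar>r1 - r2\<bar>"
    if "0 \<le> r1" "0 \<le> r2" for r1 r2
    using hdist_hyp_polar_same_direction[of 1 0 r1 r2] hdist_hyp_polar_same_direction[OF g(2) gt]
      that by auto
  have "1 - g = (cosh c - cosh (a - b)) / (sinh a * sinh b)"
    using g(3) assms(1,2) by (simp add: cosh_diff field_simps)
  moreover have "hdist (hyp_polar s 1 0) (hyp_polar s g t) = arcosh (1 + (sinh s)\<^sup>2 * (1 - g))"
    using hdist_hyp_polar_angle[OF g(2) gt, of s s] assms(5) cosh_square_eq[of s]
    by (simp add: power2_eq_square algebra_simps)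
  moreover have "1 \<le> 1 + (sinh s)\<^sup>2 * (1 - g)" using g(2) by simp
  ultimately have "cosh (hdist (hyp_polar s 1 0) (hyp_polar s g t))
      = 1 + (sinh s)\<^sup>2 * (cosh c - cosh (a - b)) / (sinh a * sinh b)"
    by (simp add: cosh_arcosh_real)
  moreover have "hdist (hyp_polar a 1 0) (hyp_polar b g t) = c"
    using hdist_hyp_polar_angle[OF g(2) gt, of a b] assms unfolding g(3)[symmetric]
    by (simp add: arcosh_cosh_real)
  ultimately show thesis
    using that[of "hyp_polar a 1 0" "hyp_polar b g t" "hyp_polar s 1 0" "hyp_polar s g t"]
      same_dir[of 0 a] same_dir[of 0 b] same_dir[of 0 s] same_dir[of s a] same_dir[of s b]
      assms g(2) by (simp add: hyp_polar_in_hyp_plane)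
qed

lemma CAT_minus1_cosh_dist_le:
  assumes cat: "CAT_minus1 X" and geo: "geodesic_space X"
    and Sx: "geodesic_segment_between X Sx z x" and Sy: "geodesic_segment_between X Sy z y"
    and "0 < dist z x" "0 < dist z y"
    and p: "p \<in> Sx" "dist z p = s" and q: "q \<in> Sy" "dist z q = s"
  shows "cosh (dist p q) \<le> 1 + (sinh s)\<^sup>2 * (cosh (dist x y) - cosh (dist z x - dist z y))
            / (sinh (dist z x) * sinh (dist z y))"
proof -
  have X: "z \<in> X" "x \<in> X" "y \<in> X" using geodesic_segment_endpoints_in Sx Sy by metis+
  obtain Sxy where Sxy: "geodesic_segment_between X Sxy x y"
    using geo X unfolding geodesic_space_def by blast
  have px: "dist p x = dist z x - s" and qy: "dist q y = dist z y - s"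
    using geodesic_segment_dist_add[OF Sx p(1)] geodesic_segment_dist_add[OF Sy q(1)] p(2) q(2)
    by auto
  have "\<bar>dist z x - dist z y\<bar> \<le> dist x y" "dist x y \<le> dist z x + dist z y"
    using dist_triangle[of z y x] dist_triangle[of z x y] dist_triangle[of x y z]
    by (auto simp: dist_commute abs_le_iff)
  moreover have "0 \<le> s" "s \<le> dist z x" "s \<le> dist z y"
    using p(2) px qy zero_le_dist[of p x] zero_le_dist[of q y] by auto
  ultimately obtain X' Y' P' Q' where hyp: "X' \<in> hyp_plane" "Y' \<in> hyp_plane" "P' \<in> hyp_plane" "Q' \<in> hyp_plane"
    and sides: "hdist \<i> X' = dist z x" "hdist X' Y' = dist x y" "hdist \<i> Y' = dist z y"
    and P': "hdist \<i> P' = s" "hdist P' X' = dist z x - s"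
    and Q': "hdist \<i> Q' = s" "hdist Q' Y' = dist z y - s"
    and PQ: "cosh (hdist P' Q') = 1 + (sinh s)\<^sup>2 * (cosh (dist x y) - cosh (dist z x - dist z y))
            / (sinh (dist z x) * sinh (dist z y))"
    using hyperbolic_triangle_equidistant_points assms(5,6) by metis
  have "\<i> \<in> hyp_plane" by (simp add: hyp_plane_def)
  then have "comparison_point z x y Sx Sxy Sy \<i> X' Y' p P'"
    and "comparison_point z x y Sx Sxy Sy \<i> X' Y' q Q'"
    using hyp p q P' Q' px qy unfolding comparison_point_def by auto
  then have "dist p q \<le> hdist P' Q'"
    using cat X Sx Sxy Sy hyp sides \<open>\<i> \<in> hyp_plane\<close> unfolding CAT_minus1_def by blast
  moreover have "0 \<le> dist p q" by simp
  ultimately show ?thesis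
    unfolding PQ[symmetric] by (subst cosh_real_nonneg_le_iff) linarith+
qed

lemma cosh_sub_cosh_le: "cosh e - cosh (D::real) \<le> exp D * (sinh e)\<^sup>2 / 2"
proof -
  have "exp D * (sinh e)\<^sup>2 / 2 - (cosh e - cosh D) = exp D * (cosh e - exp (- D))\<^sup>2 / 2"
    unfolding sinh_square_eq cosh_field_def[of D] by (simp add: exp_minus field_simps power2_eq_square)
  also have "\<dots> \<ge> 0" by simp
  finally show ?thesis by simp
qed

lemma exp_mult_sinh_le_sinh_add:
  fixes u w :: real
  assumes "0 \<le> u" "0 \<le> w"
  shows "exp u * sinh w \<le> sinh (u + w)"
proof -
  have "exp u * sinh w = cosh u * sinh w + sinh u * sinh w"
    by (simp flip: sinh_plus_cosh add: algebra_simps)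
  also have "\<dots> \<le> cosh u * sinh w + sinh u * cosh w"
    using assms sinh_le_cosh_real[of w] by (simp add: mult_left_mono)
  finally show ?thesis by (simp add: sinh_add algebra_simps)
qed

lemma comparison_defect_le:
  fixes u w D C e :: real
  assumes "0 < u" "0 \<le> w" "0 < u + D" "\<bar>D\<bar> \<le> C" "C \<le> e"
  shows "(sinh w)\<^sup>2 * (cosh C - cosh D) / (sinh (u + w) * sinh (u + D + w))
    \<le> (sinh e)\<^sup>2 / (2 * exp (2 * u))"
proof -
  have "cosh C \<le> cosh e"
    using assms cosh_real_nonneg_le_iff[of C e] by simp
  then have "cosh C - cosh D \<le> exp D * (sinh e)\<^sup>2 / 2" using cosh_sub_cosh_le[of e D] by linarith
  then have "(sinh w)\<^sup>2 * (cosh C - cosh D) \<le> (sinh w)\<^sup>2 * (exp D * (sinh e)\<^sup>2 / 2)"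
    by (intro mult_left_mono) auto
  also have "\<dots> = (sinh e)\<^sup>2 / (2 * exp (2 * u)) * ((exp u * sinh w) * (exp (u + D) * sinh w))"
    by (simp add: field_simps power2_eq_square exp_add flip: exp_add)
  also have "\<dots> \<le> (sinh e)\<^sup>2 / (2 * exp (2 * u)) * (sinh (u + w) * sinh (u + D + w))"
    using assms exp_mult_sinh_le_sinh_add[of u w] exp_mult_sinh_le_sinh_add[of "u + D" w]
    by (intro mult_left_mono mult_mono) auto
  finally show ?thesis using assms by (simp add: divide_le_eq mult.commute)
qed

lemma CAT_minus1_equidistant_dist_le:
  assumes cat: "CAT_minus1 X" and geo: "geodesic_space X"
    and Sx: "geodesic_segment_between X Sx z x" and Sy: "geodesic_segment_between X Sy z y"
    and p: "p \<in> Sx" "dist z p = s" and q: "q \<in> Sy" "dist z q = s"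
    and "dist x y \<le> e" "e < dist z x - s" and key: "sinh e \<le> 2 * exp (dist z x - s) * sinh (e / 8)"
  shows "dist p q \<le> e / 4"
proof -
  define u D where "u = dist z x - s" and "D = dist z y - dist z x"
  have "\<bar>D\<bar> \<le> dist x y"
    using dist_triangle[of z y x] dist_triangle[of z x y] unfolding D_def
    by (auto simp: dist_commute abs_le_iff)
  moreover have "0 \<le> s" using p(2) by auto
  ultimately have uD: "0 < u" "0 < u + D" "dist z x = u + s" "dist z y = u + D + s"
    using assms(9,10) unfolding u_def D_def by auto
  have "cosh (dist p q)
      \<le> 1 + (sinh s)\<^sup>2 * (cosh (dist x y) - cosh D) / (sinh (u + s) * sinh (u + D + s))"
    using CAT_minus1_cosh_dist_le[OF cat geo Sx Sy _ _ p q] uD \<open>0 \<le> s\<close> by simp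
  also have "\<dots> \<le> 1 + (sinh e)\<^sup>2 / (2 * exp (2 * u))"
    using comparison_defect_le uD \<open>\<bar>D\<bar> \<le> dist x y\<close> assms(9) \<open>0 \<le> s\<close> by simp
  also have "\<dots> \<le> 1 + 2 * (sinh (e / 8))\<^sup>2"
  proof -
    have "(sinh e)\<^sup>2 \<le> (2 * exp u * sinh (e / 8))\<^sup>2"
      using key \<open>\<bar>D\<bar> \<le> dist x y\<close> assms(9) unfolding u_def by (intro power_mono) auto
    then show ?thesis by (simp add: power_mult_distrib field_simps flip: exp_of_nat2_mult)
  qed
  also have "\<dots> = cosh (e / 4)"
    using cosh_double[of "e / 8"] cosh_square_eq[of "e / 8"] by simp
  finally show ?thesis
    using \<open>\<bar>D\<bar> \<le> dist x y\<close> assms(9) cosh_real_nonneg_le_iff[of "dist p q" "e / 4"] by simp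
qed

lemma exp_half_c0: "0 < e \<Longrightarrow> exp (c0 e / 2) = 2 * (1 + exp (e / 2)) * sinh e / e"
  by (simp add: c0_def add_pos_pos)

lemma exp_less_c0_arg:
  fixes e :: real
  assumes "0 < e"
  shows "exp e < 2 * (1 + exp (e / 2)) * sinh e / e"
proof -
  have "exp (- e) * (1 + 2 * e) \<le> exp (- e) * exp (2 * e)"
    using exp_ge_add_one_self[of "2 * e"] by simp
  then have sinh: "exp e * (2 * e / (1 + 2 * e)) \<le> 2 * sinh e"
    using assms by (simp add: sinh_field_def field_simps flip: exp_add)
  have taylor: "2 + e / 2 + e\<^sup>2 / 8 \<le> 1 + exp (e / 2)"
    using exp_lower_Taylor_quadratic[of "e / 2"] assms by (simp add: power_divide)
  have "(2 + e / 2 + e\<^sup>2 / 8) * (2 * e) - e * (1 + 2 * e) = e * ((e / 2 - 1)\<^sup>2 + 2)"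
    by (simp add: power2_eq_square algebra_simps)
  moreover have "0 < e * ((e / 2 - 1)\<^sup>2 + 2)"
    using assms by (intro mult_pos_pos) (auto intro: add_nonneg_pos)
  ultimately have poly: "e * (1 + 2 * e) < (2 + e / 2 + e\<^sup>2 / 8) * (2 * e)"
    by linarith
  have "e * exp e = exp e * (e * (1 + 2 * e)) / (1 + 2 * e)"
    using assms by simp
  also have "\<dots> < exp e * ((2 + e / 2 + e\<^sup>2 / 8) * (2 * e)) / (1 + 2 * e)"
    using poly assms by (intro divide_strict_right_mono mult_strict_left_mono) auto
  also have "\<dots> = (2 + e / 2 + e\<^sup>2 / 8) * (exp e * (2 * e / (1 + 2 * e)))"
    by simp
  also have "\<dots> \<le> (1 + exp (e / 2)) * (2 * sinh e)"
    by (rule mult_mono[OF taylor sinh]) (use assms in auto)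
  finally show ?thesis using assms by (simp add: field_simps)
qed

lemma c0_gt_double:
  assumes "0 < e"
  shows "2 * e < c0 e"
proof -
  have "exp e < exp (c0 e / 2)"
    unfolding exp_half_c0[OF assms] using exp_less_c0_arg[OF assms] .
  then show ?thesis by simp
qed

lemma sinh_le_of_c0_le:
  assumes "0 < e" "c0 e \<le> L"
  shows "sinh e \<le> 2 * exp (L / 2) * sinh (e / 8)"
proof -
  have "e / 8 \<le> sinh (e / 8)"
    using real_le_x_sinh[of "e / 8"] assms(1) by (simp add: sinh_field_def exp_minus)
  moreover have "2 \<le> 1 + exp (e / 2)" using assms(1) by simp
  ultimately have "2 * (e / 8) \<le> (1 + exp (e / 2)) * sinh (e / 8)"
    using assms(1) by (intro mult_mono) auto
  then have "e \<le> 4 * (1 + exp (e / 2)) * sinh (e / 8)" by linarith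
  then have "sinh e * e \<le> sinh e * (4 * (1 + exp (e / 2)) * sinh (e / 8))"
    using assms(1) by (intro mult_left_mono) auto
  then have "sinh e \<le> 2 * (2 * (1 + exp (e / 2)) * sinh e / e) * sinh (e / 8)"
    using assms(1) by (simp add: field_simps)
  also have "\<dots> = 2 * exp (c0 e / 2) * sinh (e / 8)"
    using exp_half_c0[OF assms(1)] by simp
  also have "\<dots> \<le> 2 * exp (L / 2) * sinh (e / 8)"
    using assms by (intro mult_right_mono mult_left_mono) auto
  finally show ?thesis .
qed

theorem lemma2p2:
  fixes X :: "'a::metric_space set" and \<epsilon> :: real and a b a' b' m :: 'a and S S' :: "'a set"
  assumes "proper_space X" and "geodesic_space X" and "CAT_minus1 X"
    and "\<epsilon> > 0"
    and "a \<in> X" "b \<in> X" "a' \<in> X" "b' \<in> X"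
    and "dist a a' \<le> \<epsilon>" "dist b b' \<le> \<epsilon>" "dist a b \<ge> c0 \<epsilon>"
    and "geodesic_segment_between X S a b" "m \<in> S" "dist a m = dist a b / 2"
    and "geodesic_segment_between X S' a' b'"
  shows "infdist m S' \<le> \<epsilon> / 2"
proof -
  note geo = assms(2) and cat = assms(3)
  let ?L = "dist a b"
  have long: "2 * \<epsilon> < ?L" using c0_gt_double assms(4,11) by fastforce
  have key: "sinh \<epsilon> \<le> 2 * exp (?L / 2) * sinh (\<epsilon> / 8)"
    using sinh_le_of_c0_le assms(4,11) .
  obtain T where T: "geodesic_segment_between X T a b'"
    using geo assms(5,8) unfolding geodesic_space_def by blast
  have "?L / 2 \<le> dist a b'"
    using dist_triangle[of a b b'] assms(10) long by (simp add: dist_commute)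
  then obtain n where n: "n \<in> T" "dist a n = ?L / 2"
    using geodesic_segment_point_at_dist[OF T _ \<open>?L / 2 \<le> dist a b'\<close>] by auto
  have mn: "dist m n \<le> \<epsilon> / 4"
    using CAT_minus1_equidistant_dist_le[OF cat geo assms(12) T assms(13,14) n] assms(10) long key
    by simp
  obtain k where k: "k \<in> S'" "dist b' k = dist b' n"
  proof (rule geodesic_segment_point_at_dist[OF geodesic_segment_between_commute[OF assms(15)]])
    show "dist b' n \<le> dist b' a'"
      using geodesic_segment_dist_add[OF T n(1)] dist_triangle[of b' a a'] assms(9) n(2) long
      by (simp add: dist_commute)
  qed auto
  have nb': "dist b' a - dist b' n = ?L / 2"
    using geodesic_segment_dist_add[OF T n(1)] n(2) by (simp add: dist_commute)
  have nk: "dist n k \<le> \<epsilon> / 4"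
    using long key
    by (intro CAT_minus1_equidistant_dist_le[OF cat geo geodesic_segment_between_commute[OF T]
        geodesic_segment_between_commute[OF assms(15)] n(1) refl k assms(9)]) (simp_all only: nb')
  have "infdist m S' \<le> dist m k" using k(1) by (rule infdist_le)
  also have "\<dots> \<le> dist m n + dist n k" by (rule dist_triangle)
  finally show ?thesis using mn nk by linarith
qed

end
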